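(* Let $(\mathbf{X},\mathbf{A})\sim \textsf{CSBM}(n,p,q,\boldsymbol{\mu},\sigma^2)$ and for an edge $(i,j)$ let $\mathbf{X}'_{ij}=\begin{pmatrix}\mathbf{X}_i\\ \mathbf{X}_j\end{pmatrix}\in\mathbb{R}^{2d}$. Consider the problem of predicting the label $y\in\{0,1\}$ of an edge $(i,j)$ ($y=1$ if intra-class, $y=0$ if inter-class) from $\mathbf{X}'_{ij}$. The Bayes optimal classifier for $\mathbf{X}'_{ij}$ is realized by $$h^*(\boldsymbol{x})=\begin{cases}0,& \text{if } p\cosh\!\left(\frac{\boldsymbol{x}^T\boldsymbol{\mu}'}{\sigma^2}\right)\le q\cosh\!\left(\frac{\boldsymbol{x}^T\boldsymbol{\nu}'}{\sigma^2}\right),\\ 1,&\text{otherwise},\end{cases}$$ where $\boldsymbol{\mu}'=\begin{pmatrix}\boldsymbol{\mu}\\ \boldsymbol{\mu}\end{pmatrix}$ and $\boldsymbol{\nu}'=\begin{pmatrix}\boldsymbol{\mu}\\ -\boldsymbol{\mu}\end{pmatrix}$.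
   Context: CSBM: fix $n,d\in\mathbb{N}$, $\boldsymbol{\mu}\in\mathbb{R}^d$, $\sigma>0$, $p,q\in[0,1]$ with $p+q>0$. Draw $\epsilon_1,\dots,\epsilon_n$ i.i.d. Bernoulli$(1/2)$, classes $C_k=\{j:\epsilon_j=k\}$. Independently $\mathbf{X}_i\sim N((2\epsilon_i-1)\boldsymbol{\mu},\sigma^2\mathbf{I})$. Adjacency entries $a_{ij}\sim\mathrm{Ber}(p)$ if $i,j$ are in the same class and $\mathrm{Ber}(q)$ otherwise. For an edge $(i,j)$ of the graph (i.e. a pair conditioned on $a_{ij}=1$), the label is $y=1$ if $i,j$ are in the same class and $y=0$ otherwise, so $\Pr[y=1]=p/(p+q)$, $\Pr[y=0]=q/(p+q)$; given $y=1$, $\mathbf{X}'_{ij}\sim N(\pm\boldsymbol{\mu}',\sigma^2\mathbf{I})$ with each sign equally likely, and given $y=0$, $\mathbf{X}'_{ij}\sim N(\pm\boldsymbol{\nu}',\sigma^2\mathbf{I})$ with each sign equally likely. The Bayes optimal classifier is $\boldsymbol{x}\mapsto\arg\max_{c\in\{0,1\}}\Pr[y=c\mid \mathbf{X}'_{ij}=\boldsymbol{x}]$. *)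

theory Defs
  imports "HOL-Analysis.Analysis"
begin

definition gauss_density :: "real \<Rightarrow> 'a::euclidean_space \<Rightarrow> 'a \<Rightarrow> real" where
  "gauss_density s2 m x = (2 * pi * s2) powr (- real DIM('a) / 2) * exp (- (norm (x - m))\<^sup>2 / (2 * s2))"

(* Edge feature X'_{ij} = (X_i, X_j) in R^{2d}, modelled as a pair of vectors in R^d. *)
definition mu' :: "real^'n \<Rightarrow> (real^'n) \<times> (real^'n)" where
  "mu' \<mu> = (\<mu>, \<mu>)"

definition nu' :: "real^'n \<Rightarrow> (real^'n) \<times> (real^'n)" where
  "nu' \<mu> = (\<mu>, - \<mu>)"

definition edge_prior :: "real \<Rightarrow> real \<Rightarrow> nat \<Rightarrow> real" where
  "edge_prior p q c = (if c = 1 then p / (p + q) else q / (p + q))"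

definition edge_cond_density :: "real^'n \<Rightarrow> real \<Rightarrow> nat \<Rightarrow> (real^'n) \<times> (real^'n) \<Rightarrow> real" where
  "edge_cond_density \<mu> s2 c x =
     (if c = 1 then (gauss_density s2 (mu' \<mu>) x + gauss_density s2 (- mu' \<mu>) x) / 2
      else (gauss_density s2 (nu' \<mu>) x + gauss_density s2 (- nu' \<mu>) x) / 2)"

definition edge_posterior :: "real \<Rightarrow> real \<Rightarrow> real^'n \<Rightarrow> real \<Rightarrow> nat \<Rightarrow> (real^'n) \<times> (real^'n) \<Rightarrow> real" where
  "edge_posterior p q \<mu> s2 c x =
     edge_prior p q c * edge_cond_density \<mu> s2 c x /
     (\<Sum>c'\<in>{0,1}. edge_prior p q c' * edge_cond_density \<mu> s2 c' x)"

definition is_bayes_optimal :: "(nat \<Rightarrow> 'x \<Rightarrow> real) \<Rightarrow> ('x \<Rightarrow> nat) \<Rightarrow> bool" where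
  "is_bayes_optimal post h \<longleftrightarrow> (\<forall>x. h x \<in> {0,1} \<and> (\<forall>c\<in>{0,1}. post c x \<le> post (h x) x))"

definition h_star :: "real \<Rightarrow> real \<Rightarrow> real^'n \<Rightarrow> real \<Rightarrow> (real^'n) \<times> (real^'n) \<Rightarrow> nat" where
  "h_star p q \<mu> s2 x =
     (if p * cosh ((x \<bullet> mu' \<mu>) / s2) \<le> q * cosh ((x \<bullet> nu' \<mu>) / s2) then 0 else 1)"

end

theory Submission
  imports Defs
begin

text \<open>
  Dividing by the evidence does not change which class maximises the posterior, so the Bayes
  classifier compares the joint weights \<open>prior \<times> likelihood\<close>. Each likelihood is a symmetric
  Gaussian mixture \<open>(N(m, \<sigma>\<^sup>2I) + N(-m, \<sigma>\<^sup>2I))/2\<close>, which equals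
  \<open>N(0, \<sigma>\<^sup>2I)(x) exp(-\<parallel>m\<parallel>\<^sup>2/2\<sigma>\<^sup>2) cosh(x\<^sup>Tm/\<sigma>\<^sup>2)\<close>. Since \<open>\<parallel>\<mu>'\<parallel> = \<parallel>\<nu>'\<parallel>\<close>, all factors except the
  priors and the two \<open>cosh\<close> terms are shared by both classes and cancel.
\<close>

lemma is_bayes_optimal_threshold:
  "is_bayes_optimal w (\<lambda>x. if w 1 x \<le> w 0 x then 0 else 1)"
  unfolding is_bayes_optimal_def by auto

lemma is_bayes_optimal_normalize:
  fixes w :: "nat \<Rightarrow> 'x \<Rightarrow> real"
  assumes "\<And>c x. 0 \<le> w c x" and "is_bayes_optimal w h"
  shows "is_bayes_optimal (\<lambda>c x. w c x / (\<Sum>c'\<in>{0,1}. w c' x)) h"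
  using assms unfolding is_bayes_optimal_def by (simp add: divide_right_mono)

lemma gauss_density_nonneg: "0 \<le> gauss_density s2 m x"
  unfolding gauss_density_def by simp

lemma gauss_density_pos: "s2 > 0 \<Longrightarrow> 0 < gauss_density s2 m x"
  unfolding gauss_density_def by simp

lemma gauss_density_add_reflect:
  fixes m x :: "'a::euclidean_space"
  shows "gauss_density s2 m x + gauss_density s2 (- m) x =
    2 * gauss_density s2 0 x * exp (- (norm m)\<^sup>2 / (2 * s2)) * cosh ((x \<bullet> m) / s2)"
proof -
  have "exp (- (norm (x - t))\<^sup>2 / (2 * s2)) =
      exp (- (norm x)\<^sup>2 / (2 * s2)) * exp (- (norm t)\<^sup>2 / (2 * s2)) * exp ((x \<bullet> t) / s2)"
    for t :: 'a
  proof -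
    have "(norm (x - t))\<^sup>2 = (norm x)\<^sup>2 + (norm t)\<^sup>2 - 2 * (x \<bullet> t)"
      by (simp add: dot_norm_neg field_simps)
    then show ?thesis
      by (simp add: exp_add[symmetric] add_divide_distrib diff_divide_distrib)
  qed
  from this[of m] this[of "- m"] show ?thesis
    unfolding gauss_density_def cosh_field_def by (simp add: algebra_simps)
qed

lemma norm_nu'_eq_norm_mu': "norm (nu' \<mu>) = norm (mu' \<mu>)"
  by (simp add: mu'_def nu'_def norm_Pair)

lemma edge_cond_density_nonneg: "0 \<le> edge_cond_density \<mu> s2 c x"
  unfolding edge_cond_density_def by (simp add: gauss_density_nonneg)

lemma edge_cond_density_cosh:
  fixes \<mu> :: "real^'n" and s2 :: real and x :: "(real^'n) \<times> (real^'n)"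
  defines "K \<equiv> gauss_density s2 0 x * exp (- (norm (mu' \<mu>))\<^sup>2 / (2 * s2))"
  shows "edge_cond_density \<mu> s2 1 x = K * cosh ((x \<bullet> mu' \<mu>) / s2)"
    and "edge_cond_density \<mu> s2 0 x = K * cosh ((x \<bullet> nu' \<mu>) / s2)"
  unfolding edge_cond_density_def K_def gauss_density_add_reflect
  by (simp_all add: norm_nu'_eq_norm_mu')

lemma h_star_eq_threshold:
  assumes "s2 > 0" and "p + q > 0"
  shows "h_star p q \<mu> s2 x =
    (if edge_prior p q 1 * edge_cond_density \<mu> s2 1 x
        \<le> edge_prior p q 0 * edge_cond_density \<mu> s2 0 x then 0 else 1)"
proof -
  define K where "K = gauss_density s2 0 x * exp (- (norm (mu' \<mu>))\<^sup>2 / (2 * s2))"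
  have K_pos: "K / (p + q) > 0"
    using assms by (simp add: K_def gauss_density_pos)
  have "edge_prior p q 1 * edge_cond_density \<mu> s2 1 x = p * cosh ((x \<bullet> mu' \<mu>) / s2) * (K / (p + q))"
    and "edge_prior p q 0 * edge_cond_density \<mu> s2 0 x = q * cosh ((x \<bullet> nu' \<mu>) / s2) * (K / (p + q))"
    unfolding edge_cond_density_cosh K_def[symmetric] by (simp_all add: edge_prior_def)
  then show ?thesis
    unfolding h_star_def by (simp only: mult_le_cancel_right_pos[OF K_pos])
qed

theorem lemma8:
  fixes \<mu> :: "real^'n" and \<sigma> p q :: real
  assumes "\<sigma> > 0" and "0 \<le> p" "p \<le> 1" and "0 \<le> q" "q \<le> 1" and "p + q > 0"
  shows "is_bayes_optimal (edge_posterior p q \<mu> (\<sigma>\<^sup>2)) (h_star p q \<mu> (\<sigma>\<^sup>2))"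
proof -
  define w where "w c x = edge_prior p q c * edge_cond_density \<mu> (\<sigma>\<^sup>2) c x" for c x
  have posterior: "edge_posterior p q \<mu> (\<sigma>\<^sup>2) = (\<lambda>c x. w c x / (\<Sum>c'\<in>{0,1}. w c' x))"
    unfolding w_def edge_posterior_def by simp
  have classifier: "h_star p q \<mu> (\<sigma>\<^sup>2) = (\<lambda>x. if w 1 x \<le> w 0 x then 0 else 1)"
    unfolding w_def using assms by (intro ext h_star_eq_threshold) simp_all
  have w_nonneg: "0 \<le> w c x" for c x
    using assms by (simp add: w_def edge_prior_def edge_cond_density_nonneg)
  show ?thesis
    unfolding posterior classifier
    by (rule is_bayes_optimal_normalize[OF w_nonneg is_bayes_optimal_threshold])
qed

end
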